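(* Let $k_0>0$, $L>0$, $\alpha\in C^1[0,L]$ and $\mathbf n=(n_1,n_2,n_3)^\top\in C^1([0,L],\mathbb{S}^2)$. Then, for $(k_1,k_2,t)\in\mathcal U$, the Jacobian determinant of $T_\pm$ satisfies $$|\nabla T_\pm(k_1,k_2,t)|=\frac{k_0}{\kappa}\Big|(1-\cos\alpha)\big(n_3\,\mathbf n'\cdot\mathbf h-n_3'\,\mathbf n\cdot\mathbf h\big)-n_3\,\mathbf n\cdot(\mathbf n'\times\mathbf h)\sin\alpha-\alpha'(n_1k_2-n_2k_1)+(\mathbf n\cdot\mathbf h)(n_1n_2'-n_2n_1')\sin\alpha\Big|,$$ where $\mathbf h=(k_1,k_2,\pm\kappa-k_0)^\top$ and $\mathbf n,\mathbf n',\alpha,\alpha'$ are evaluated at $t$. In particular $|\nabla T_\pm|\in L^1(\mathcal U)$.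
   Context: $\mathbb{S}^2$ is the unit sphere in $\mathbb{R}^3$; primes denote derivatives in $t$. For a unit vector $\mathbf n$ and angle $\alpha$, $R_{\mathbf n,\alpha}$ is the rotation with $R_{\mathbf n,\alpha}\mathbf y=(1-\cos\alpha)(\mathbf n\cdot\mathbf y)\mathbf n+\cos\alpha\,\mathbf y-\sin\alpha\,(\mathbf n\times\mathbf y)$. $\kappa=\kappa(k_1,k_2)=\sqrt{k_0^2-k_1^2-k_2^2}$ (positive on $\mathcal U$). $\mathcal U=\{(k_1,k_2,t)\in\mathbb{R}^3:k_1^2+k_2^2<k_0^2,\ 0\le t\le L\}$, $T_\pm:\mathcal U\to\mathbb{R}^3$, $T_\pm(k_1,k_2,t)=R_{\mathbf n(t),\alpha(t)}(k_1,k_2,\pm\kappa-k_0)^\top$, and $|\nabla T_\pm|$ is the absolute value of the determinant of the Jacobian of $T_\pm$ with respect to $(k_1,k_2,t)$. *)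

theory Defs
  imports "HOL-Analysis.Analysis" "HOL-Analysis.Cross3"
begin

definition rot :: "real^3 \<Rightarrow> real \<Rightarrow> real^3 \<Rightarrow> real^3" where
  "rot nv a y = ((1 - cos a) * (nv \<bullet> y)) *\<^sub>R nv + cos a *\<^sub>R y - sin a *\<^sub>R (cross3 nv y)"

text \<open>Points (k1,k2,t) are encoded as x :: real^3 with x$1 = k1, x$2 = k2, x$3 = t.\<close>
definition kap :: "real \<Rightarrow> real^3 \<Rightarrow> real" where
  "kap k0 x = sqrt (k0\<^sup>2 - (x$1)\<^sup>2 - (x$2)\<^sup>2)"

definition UU :: "real \<Rightarrow> real \<Rightarrow> (real^3) set" where
  "UU k0 L = {x. (x$1)\<^sup>2 + (x$2)\<^sup>2 < k0\<^sup>2 \<and> 0 \<le> x$3 \<and> x$3 \<le> L}"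

definition hvec :: "real \<Rightarrow> real \<Rightarrow> real^3 \<Rightarrow> real^3" where
  "hvec k0 s x = vector [x$1, x$2, s * kap k0 x - k0]"

definition Tmap :: "real \<Rightarrow> (real \<Rightarrow> real^3) \<Rightarrow> (real \<Rightarrow> real) \<Rightarrow> real \<Rightarrow> real^3 \<Rightarrow> real^3" where
  "Tmap k0 nf af s x = rot (nf (x$3)) (af (x$3)) (hvec k0 s x)"

end

theory Submission
  imports Defs
begin

text \<open>Write \<open>T(k1, k2, t) = R(t) h(k1, k2)\<close>, where \<open>h\<close> parametrises the sphere
  \<open>|h + k0 e3| = k0\<close> over the disc \<open>k1\<^sup>2 + k2\<^sup>2 < k0\<^sup>2\<close>. The \<open>k1\<close>- and \<open>k2\<close>-columns of the
  Jacobian are \<open>R\<close> applied to tangent vectors of this sphere, so their cross product is \<open>R\<close>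
  applied to the normal \<open>(\<plusminus>1/\<kappa>)(h + k0 e3)\<close>; the \<open>t\<close>-column \<open>\<partial>\<^sub>t(R h)\<close> is orthogonal to
  \<open>R h\<close> because \<open>R\<close> is a rotation. Hence the determinant is \<open>\<plusminus>(k0/\<kappa>) R e3 \<bullet> \<partial>\<^sub>t(R h)\<close>, which
  expands to the stated bracket. The bracket is continuous on a compact box, so
  \<open>|\<nabla>T| \<le> C/\<kappa>\<close>, and \<open>1/\<kappa>\<close> is integrable over \<open>\<U>\<close> because it is the Jacobian determinant of the
  injective map \<open>(k1, k2, t) \<mapsto> (k1, arcsin (k2 / sqrt (k0\<^sup>2 - k1\<^sup>2)), t)\<close>, whose image is
  bounded.\<close>

lemma linear_rot: "linear (rot N A)"
  by (rule linearI) (simp_all add: rot_def inner_add_right cross_add_right cross_mult_right algebra_simps)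

lemma rot_cross3:
  assumes "N \<bullet> N = 1"
  shows "cross3 (rot N A u) (rot N A v) = rot N A (cross3 u v)"
proof -
  have "N$1 * N$1 + N$2 * N$2 + N$3 * N$3 = 1" using assms by (simp add: inner_vec_def sum_3)
  moreover have "(cos A)\<^sup>2 + (sin A)\<^sup>2 = 1" by simp
  ultimately show ?thesis
    unfolding rot_def vec_eq_iff forall_3 cross3_def inner_vec_def sum_3 vector_3
    by (simp; algebra)
qed

definition rot_deriv :: "real^3 \<Rightarrow> real \<Rightarrow> real^3 \<Rightarrow> real \<Rightarrow> real^3 \<Rightarrow> real^3" where
  "rot_deriv N A m a h =
     (a * sin A * (N \<bullet> h) + (1 - cos A) * (m \<bullet> h)) *\<^sub>R N + ((1 - cos A) * (N \<bullet> h)) *\<^sub>R m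
     - (a * sin A) *\<^sub>R h - (a * cos A) *\<^sub>R cross3 N h - sin A *\<^sub>R cross3 m h"

lemma has_derivative_rot:
  assumes N: "(N has_derivative N') (at x within S)"
    and A: "(A has_derivative A') (at x within S)"
    and H: "(H has_derivative H') (at x within S)"
  shows "((\<lambda>y. rot (N y) (A y) (H y)) has_derivative
           (\<lambda>v. rot (N x) (A x) (H' v) + rot_deriv (N x) (A x) (N' v) (A' v) (H x))) (at x within S)"
proof -
  have cross3: "bounded_bilinear cross3"
    using bilinear_cross bilinear_conv_bounded_bilinear by blast
  show ?thesis
    unfolding rot_def
    by (rule has_derivative_eq_rhs[OF has_derivative_diff[OF has_derivative_add[OF
          has_derivative_scaleR[OF has_derivative_mult[OF
            has_derivative_diff[OF has_derivative_const has_derivative_cos[OF A]]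
            has_derivative_inner[OF N H]] N]
          has_derivative_scaleR[OF has_derivative_cos[OF A] H]]
          has_derivative_scaleR[OF has_derivative_sin[OF A] bounded_bilinear.FDERIV[OF cross3 N H]]]])
       (simp add: fun_eq_iff rot_deriv_def algebra_simps)
qed

lemma inner_rot_rot_deriv:
  assumes "N \<bullet> N = 1" "N \<bullet> m = 0"
  shows "rot N A h \<bullet> rot_deriv N A m a h = 0"
proof -
  have "N$1 * N$1 + N$2 * N$2 + N$3 * N$3 = 1" "N$1 * m$1 + N$2 * m$2 + N$3 * m$3 = 0"
    using assms by (simp_all add: inner_vec_def sum_3)
  moreover have "(cos A)\<^sup>2 + (sin A)\<^sup>2 = 1" by simp
  ultimately show ?thesis
    unfolding rot_deriv_def rot_def cross3_def inner_vec_def sum_3 vector_3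
    by (simp; algebra)
qed

definition jacobian_factor :: "real^3 \<Rightarrow> real \<Rightarrow> real^3 \<Rightarrow> real \<Rightarrow> real^3 \<Rightarrow> real" where
  "jacobian_factor N A m a h =
     (1 - cos A) * (N$3 * (m \<bullet> h) - m$3 * (N \<bullet> h)) - N$3 * (N \<bullet> cross3 m h) * sin A
     - a * (N$1 * h$2 - N$2 * h$1) + (N \<bullet> h) * (N$1 * m$2 - N$2 * m$1) * sin A"

lemma inner_rot_axis3_rot_deriv:
  assumes "N \<bullet> N = 1" "N \<bullet> m = 0"
  shows "rot N A (axis 3 1) \<bullet> rot_deriv N A m a h = jacobian_factor N A m a h"
proof -
  have "N$1 * N$1 + N$2 * N$2 + N$3 * N$3 = 1" "N$1 * m$1 + N$2 * m$2 + N$3 * m$3 = 0"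
    using assms by (simp_all add: inner_vec_def sum_3)
  moreover have "(cos A)\<^sup>2 + (sin A)\<^sup>2 = 1" by simp
  ultimately show ?thesis
    unfolding jacobian_factor_def rot_deriv_def rot_def cross3_def inner_vec_def sum_3 vector_3
    by (simp add: axis_def; algebra)
qed

lemma det_matrix_cross3:
  "det (matrix (D :: real^3 \<Rightarrow> real^3)) = cross3 (D (axis 1 1)) (D (axis 2 1)) \<bullet> D (axis 3 1)"
  unfolding matrix_def det_3 cross3_def inner_vec_def sum_3 vector_3 vec_lambda_beta
  by (simp add: algebra_simps)

lemma has_derivative_vec_nth [derivative_intros]: "((\<lambda>y::real^'n. y$i) has_derivative (\<lambda>v. v$i)) F"
  by (simp add: bounded_linear_vec_nth bounded_linear_imp_has_derivative)

lemma has_derivative_kap: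
  assumes "(x$1)\<^sup>2 + (x$2)\<^sup>2 < k0\<^sup>2"
  shows "(kap k0 has_derivative (\<lambda>v. - (x$1 * v$1 + x$2 * v$2) / kap k0 x)) (at x within S)"
  using assms unfolding kap_def [abs_def]
  by (auto intro!: derivative_eq_intros simp: field_simps power2_eq_square)

lemma hvec_eq_sum_axis:
  "hvec k0 s = (\<lambda>y. y$1 *\<^sub>R axis 1 1 + y$2 *\<^sub>R axis 2 1 + (s * kap k0 y - k0) *\<^sub>R axis 3 1)"
  by (simp add: fun_eq_iff hvec_def vec_eq_iff forall_3 axis_def)

definition hvec_deriv :: "real \<Rightarrow> real \<Rightarrow> real^3 \<Rightarrow> real^3 \<Rightarrow> real^3" where
  "hvec_deriv k0 s x v = vector [v$1, v$2, - s * (x$1 * v$1 + x$2 * v$2) / kap k0 x]"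

lemma has_derivative_hvec:
  assumes "(x$1)\<^sup>2 + (x$2)\<^sup>2 < k0\<^sup>2"
  shows "(hvec k0 s has_derivative hvec_deriv k0 s x) (at x within S)"
  unfolding hvec_eq_sum_axis
  by (rule derivative_eq_intros has_derivative_kap[OF assms] refl)+
     (simp add: fun_eq_iff hvec_deriv_def vec_eq_iff forall_3 axis_def algebra_simps)

lemma has_derivative_comp_vec_nth:
  assumes "(f has_derivative f') (at (x$i) within T)" and "(\<lambda>y. y$i) ` S \<subseteq> T"
  shows "((\<lambda>y. f (y$i)) has_derivative (\<lambda>v. f' (v$i))) (at (x :: real^'n) within S)"
  using diff_chain_within[OF has_derivative_vec_nth has_derivative_subset[OF assms]]
  by (simp add: o_def)

lemma has_derivative_Tmap:
  assumes x: "(x$1)\<^sup>2 + (x$2)\<^sup>2 < k0\<^sup>2" and S: "(\<lambda>y. y$3) ` S \<subseteq> T"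
    and n: "(n has_vector_derivative m) (at (x$3) within T)"
    and \<alpha>: "(\<alpha> has_real_derivative a) (at (x$3) within T)"
  shows "(Tmap k0 n \<alpha> s has_derivative
           (\<lambda>v. rot (n (x$3)) (\<alpha> (x$3)) (hvec_deriv k0 s x v)
                + v$3 *\<^sub>R rot_deriv (n (x$3)) (\<alpha> (x$3)) m a (hvec k0 s x))) (at x within S)"
proof -
  have "(Tmap k0 n \<alpha> s has_derivative
           (\<lambda>v. rot (n (x$3)) (\<alpha> (x$3)) (hvec_deriv k0 s x v)
                + rot_deriv (n (x$3)) (\<alpha> (x$3)) (v$3 *\<^sub>R m) (a * v$3) (hvec k0 s x))) (at x within S)"
    unfolding Tmap_def [abs_def]
    using n \<alpha> unfolding has_vector_derivative_def has_field_derivative_def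
    by (intro has_derivative_rot has_derivative_hvec[OF x] has_derivative_comp_vec_nth[OF _ S])
       simp_all
  then show ?thesis
    by (rule has_derivative_eq_rhs) (simp add: fun_eq_iff rot_deriv_def cross_mult_left algebra_simps)
qed

lemma det_Tmap_derivative:
  assumes x: "(x$1)\<^sup>2 + (x$2)\<^sup>2 < k0\<^sup>2" and s: "s = 1 \<or> s = -1"
    and N: "N \<bullet> N = 1" "N \<bullet> m = 0"
  shows "det (matrix (\<lambda>v. rot N A (hvec_deriv k0 s x v) + v$3 *\<^sub>R rot_deriv N A m a (hvec k0 s x)))
           = s * k0 / kap k0 x * jacobian_factor N A m a (hvec k0 s x)"
proof -
  define h where "h = hvec k0 s x"
  define \<kappa> where "\<kappa> = kap k0 x"
  have "\<kappa> > 0" using x by (simp add: \<kappa>_def kap_def)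
  have normal: "cross3 (hvec_deriv k0 s x (axis 1 1)) (hvec_deriv k0 s x (axis 2 1))
                  = (s / \<kappa>) *\<^sub>R (h + k0 *\<^sub>R axis 3 1)"
    using \<open>\<kappa> > 0\<close> s
    by (auto simp: cross3_def h_def hvec_def hvec_deriv_def vec_eq_iff forall_3 axis_def \<kappa>_def field_simps)
  define D where "D = (\<lambda>v. rot N A (hvec_deriv k0 s x v) + v$3 *\<^sub>R rot_deriv N A m a h)"
  have "hvec_deriv k0 s x (axis 3 1) = 0"
    by (simp add: hvec_deriv_def axis_def vec_eq_iff forall_3)
  then have "det (matrix D) = cross3 (rot N A (hvec_deriv k0 s x (axis 1 1)))
      (rot N A (hvec_deriv k0 s x (axis 2 1))) \<bullet> rot_deriv N A m a h"
    by (simp add: det_matrix_cross3 D_def axis_def linear_0[OF linear_rot])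
  also have "\<dots> = rot N A ((s / \<kappa>) *\<^sub>R (h + k0 *\<^sub>R axis 3 1)) \<bullet> rot_deriv N A m a h"
    by (simp add: rot_cross3[OF N(1)] normal)
  also have "\<dots> = (s / \<kappa>) * (rot N A h \<bullet> rot_deriv N A m a h
                              + k0 * (rot N A (axis 3 1) \<bullet> rot_deriv N A m a h))"
    by (simp add: linear_cmul[OF linear_rot] linear_add[OF linear_rot] inner_add_left)
  also have "\<dots> = s * k0 / \<kappa> * jacobian_factor N A m a h"
    by (simp add: inner_rot_rot_deriv[OF N] inner_rot_axis3_rot_deriv[OF N])
  finally show ?thesis by (simp add: D_def h_def \<kappa>_def)
qed

lemma UU_approachable:
  assumes x: "x \<in> UU k0 L" and L: "L > 0" and i: "i \<in> Basis" and e: "e > 0"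
  shows "\<exists>d. 0 < \<bar>d\<bar> \<and> \<bar>d\<bar> < e \<and> x + d *\<^sub>R i \<in> UU k0 L"
proof -
  obtain j where j: "i = axis j 1" using i by (auto simp: Basis_vec_def)
  have x12: "(x$1)\<^sup>2 + (x$2)\<^sup>2 < k0\<^sup>2" and x3: "0 \<le> x$3" "x$3 \<le> L"
    using x by (auto simp: UU_def)
  show ?thesis
  proof (cases "j = 3")
    case False
    have "open {y::real^3. (y$1)\<^sup>2 + (y$2)\<^sup>2 < k0\<^sup>2}"
      by (intro open_Collect_less continuous_intros)
    then obtain r where r: "r > 0" "ball x r \<subseteq> {y. (y$1)\<^sup>2 + (y$2)\<^sup>2 < k0\<^sup>2}"
      using x12 by (force simp: open_contains_ball)
    define d where "d = min e r / 2"
    have "d > 0" "d < e" "d < r" using r e by (auto simp: d_def)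
    moreover from this have "x + d *\<^sub>R i \<in> ball x r"
      by (simp add: j dist_norm)
    moreover have "(x + d *\<^sub>R i)$3 = x$3" using False by (simp add: j axis_def)
    ultimately show ?thesis
      using r x3 by (intro exI[of _ d]) (auto simp: UU_def)
  next
    case True
    define d where "d = (if x$3 < L then min (e/2) (L - x$3) else - min (e/2) L)"
    have "0 < \<bar>d\<bar>" "\<bar>d\<bar> < e" using e L by (auto simp: d_def)
    moreover have "x + d *\<^sub>R i \<in> UU k0 L"
      using x12 x3 e L by (auto simp: UU_def j True axis_def d_def)
    ultimately show ?thesis by blast
  qed
qed

lemma det_jacobian_Tmap:
  assumes x: "x \<in> UU k0 L" and L: "L > 0" and s: "s = 1 \<or> s = -1"
    and n: "(n has_vector_derivative m) (at (x$3) within {0..L})"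
    and \<alpha>: "(\<alpha> has_real_derivative a) (at (x$3) within {0..L})"
    and N: "n (x$3) \<bullet> n (x$3) = 1" "n (x$3) \<bullet> m = 0"
  shows "Tmap k0 n \<alpha> s differentiable (at x within UU k0 L)"
    and "det (jacobian (Tmap k0 n \<alpha> s) (at x within UU k0 L))
           = s * k0 / kap k0 x * jacobian_factor (n (x$3)) (\<alpha> (x$3)) m a (hvec k0 s x)"
proof -
  have x12: "(x$1)\<^sup>2 + (x$2)\<^sup>2 < k0\<^sup>2" using x by (simp add: UU_def)
  have "(\<lambda>y. y$3) ` UU k0 L \<subseteq> {0..L}" by (auto simp: UU_def)
  note T' = has_derivative_Tmap[OF x12 this n \<alpha>, of s]
  then show diff: "Tmap k0 n \<alpha> s differentiable (at x within UU k0 L)"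
    by (auto simp: differentiable_def)
  have "jacobian (Tmap k0 n \<alpha> s) (at x within UU k0 L) = matrix
          (\<lambda>v. rot (n (x$3)) (\<alpha> (x$3)) (hvec_deriv k0 s x v)
               + v$3 *\<^sub>R rot_deriv (n (x$3)) (\<alpha> (x$3)) m a (hvec k0 s x))"
    unfolding jacobian_def
    using frechet_derivative_unique_within[OF frechet_derivative_works[THEN iffD1, OF diff] T'
        UU_approachable[OF x L]] by simp
  then show "det (jacobian (Tmap k0 n \<alpha> s) (at x within UU k0 L))
           = s * k0 / kap k0 x * jacobian_factor (n (x$3)) (\<alpha> (x$3)) m a (hvec k0 s x)"
    using det_Tmap_derivative[OF x12 s N] by simp
qed

lemma UU_sets_lebesgue: "UU k0 L \<in> sets lebesgue"
proof -
  have "UU k0 L \<in> sets borel"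
    unfolding UU_def by measurable
  then show ?thesis by simp
qed

lemma UU_radicand_pos:
  assumes "x \<in> UU k0 L"
  shows "0 < k0\<^sup>2 - (x$1)\<^sup>2"
proof -
  have "(x$1)\<^sup>2 + (x$2)\<^sup>2 < k0\<^sup>2" using assms by (simp add: UU_def)
  then show ?thesis using zero_le_power2[of "x$2"] by linarith
qed

lemma UU_abs_nth2_less:
  assumes "x \<in> UU k0 L"
  shows "\<bar>x$2\<bar> < sqrt (k0\<^sup>2 - (x$1)\<^sup>2)"
  using assms by (intro real_less_rsqrt) (simp add: UU_def)

lemma UU_kap_pos: "x \<in> UU k0 L \<Longrightarrow> 0 < kap k0 x"
  by (simp add: UU_def kap_def)

definition arcsin_chart :: "real \<Rightarrow> real^3 \<Rightarrow> real^3" where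
  "arcsin_chart k0 x = vector [x$1, arcsin (x$2 / sqrt (k0\<^sup>2 - (x$1)\<^sup>2)), x$3]"

lemma has_derivative_arcsin_chart:
  assumes x: "x \<in> UU k0 L"
  shows "\<exists>G. (arcsin_chart k0 has_derivative G) (at x within S) \<and> det (matrix G) = 1 / kap k0 x"
proof -
  define a where "a = sqrt (k0\<^sup>2 - (x$1)\<^sup>2)"
  have x2: "\<bar>x$2\<bar> < a" using UU_abs_nth2_less[OF x] by (simp add: a_def)
  have pos: "0 < k0\<^sup>2 - (x$1)\<^sup>2" using UU_radicand_pos[OF x] .
  have a: "a > 0" "a\<^sup>2 = k0\<^sup>2 - (x$1)\<^sup>2" using pos by (simp_all add: a_def)
  define w where "w = x$2 / a"
  have w: "-1 < w" "w < 1" using x2 a by (auto simp: w_def field_simps abs_less_iff)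
  have "sqrt (1 - w\<^sup>2) = sqrt ((a\<^sup>2 - (x$2)\<^sup>2) / a\<^sup>2)"
    using a by (simp add: w_def field_simps)
  also have "\<dots> = kap k0 x / a"
    using pos by (simp add: real_sqrt_divide kap_def a_def)
  finally have sqrt_w: "sqrt (1 - w\<^sup>2) = kap k0 x / a" .
  obtain W where W: "((\<lambda>y::real^3. y$2 / sqrt (k0\<^sup>2 - (y$1)\<^sup>2)) has_derivative W) (at x within S)"
    and W2: "W (axis 2 1) = 1 / a"
    using has_derivative_divide[OF has_derivative_vec_nth has_derivative_real_sqrt[OF pos
          has_derivative_diff[OF has_derivative_const has_derivative_power[OF has_derivative_vec_nth]]]]
      a by (fastforce simp: axis_def a_def)
  define G where "G = (\<lambda>v. v + (W v / sqrt (1 - w\<^sup>2) - v$2) *\<^sub>R (axis 2 1 :: real^3))"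
  have chart: "arcsin_chart k0 = (\<lambda>y. y + (arcsin (y$2 / sqrt (k0\<^sup>2 - (y$1)\<^sup>2)) - y$2) *\<^sub>R axis 2 1)"
    by (simp add: fun_eq_iff arcsin_chart_def vec_eq_iff forall_3 axis_def)
  have "(arcsin_chart k0 has_derivative G) (at x within S)"
    unfolding chart G_def
    by (rule has_derivative_eq_rhs[OF has_derivative_add[OF has_derivative_ident
          has_derivative_scaleR_left[OF has_derivative_diff[OF
            has_derivative_arcsin[OF _ _ W] has_derivative_vec_nth]]]])
       (use w in \<open>simp_all add: w_def a_def fun_eq_iff divide_inverse\<close>)
  moreover have "det (matrix G) = 1 / kap k0 x"
    unfolding G_def matrix_def det_3 using W2 sqrt_w a by (simp add: axis_def)
  ultimately show ?thesis by blast
qed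

lemma inj_on_arcsin_chart: "inj_on (arcsin_chart k0) (UU k0 L)"
proof (rule inj_onI)
  fix x y assume x: "x \<in> UU k0 L" and y: "y \<in> UU k0 L" and eq: "arcsin_chart k0 x = arcsin_chart k0 y"
  have 13: "x$1 = y$1" "x$3 = y$3"
    using arg_cong[OF eq, of "\<lambda>v. v$1"] arg_cong[OF eq, of "\<lambda>v. v$3"] by (simp_all add: arcsin_chart_def)
  define a where "a = sqrt (k0\<^sup>2 - (x$1)\<^sup>2)"
  have "\<bar>x$2\<bar> < a" "\<bar>y$2\<bar> < a"
    using UU_abs_nth2_less[OF x] UU_abs_nth2_less[OF y] 13 by (simp_all add: a_def)
  moreover have "arcsin (x$2 / a) = arcsin (y$2 / a)"
    using arg_cong[OF eq, of "\<lambda>v. v$2"] 13 by (simp add: arcsin_chart_def a_def)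
  ultimately have "x$2 = y$2"
    by (subst (asm) arcsin_eq_iff) (auto simp: abs_div)
  with 13 show "x = y" by (simp add: vec_eq_iff forall_3)
qed

lemma arcsin_chart_image_subset:
  "arcsin_chart k0 ` UU k0 L \<subseteq> cbox (vector [-\<bar>k0\<bar>, -2, 0]) (vector [\<bar>k0\<bar>, 2, L])"
proof
  fix y assume "y \<in> arcsin_chart k0 ` UU k0 L"
  then obtain x where x: "x \<in> UU k0 L" and y: "y = arcsin_chart k0 x" by blast
  have arcsin_le_2: "\<bar>arcsin w\<bar> \<le> 2" if "\<bar>w\<bar> \<le> 1" for w :: real
    using arcsin_bounded[of w] that pi_less_4 by (auto simp: abs_le_iff)
  have "(x$1)\<^sup>2 \<le> k0\<^sup>2" using UU_radicand_pos[OF x] by simp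
  then have "\<bar>x$1\<bar> \<le> \<bar>k0\<bar>" by (simp add: abs_le_square_iff)
  moreover have "\<bar>x$2 / sqrt (k0\<^sup>2 - (x$1)\<^sup>2)\<bar> \<le> 1"
    using UU_abs_nth2_less[OF x] UU_radicand_pos[OF x] by (simp add: abs_div)
  then have "\<bar>arcsin (x$2 / sqrt (k0\<^sup>2 - (x$1)\<^sup>2))\<bar> \<le> 2" by (rule arcsin_le_2)
  ultimately show "y \<in> cbox (vector [-\<bar>k0\<bar>, -2, 0]) (vector [\<bar>k0\<bar>, 2, L])"
    using x by (auto simp: y arcsin_chart_def mem_box_cart forall_3 abs_le_iff UU_def)
qed

lemma absolutely_integrable_inverse_kap: "(\<lambda>x. 1 / kap k0 x) absolutely_integrable_on UU k0 L"
proof -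
  have "\<forall>x\<in>UU k0 L. \<exists>G. (arcsin_chart k0 has_derivative G) (at x within UU k0 L)
                           \<and> det (matrix G) = 1 / kap k0 x"
    using has_derivative_arcsin_chart by blast
  from bchoice[OF this] obtain G where "\<forall>x\<in>UU k0 L. (arcsin_chart k0 has_derivative G x) (at x within UU k0 L)
                           \<and> det (matrix (G x)) = 1 / kap k0 x"
    by blast
  then have G: "\<And>x. x \<in> UU k0 L \<Longrightarrow> (arcsin_chart k0 has_derivative G x) (at x within UU k0 L)"
    "\<And>x. x \<in> UU k0 L \<Longrightarrow> det (matrix (G x)) = 1 / kap k0 x"
    by blast+
  have "arcsin_chart k0 differentiable_on UU k0 L"
    using G(1) by (auto simp: differentiable_on_def differentiable_def)
  then have "arcsin_chart k0 ` UU k0 L \<in> sets lebesgue"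
    by (intro differentiable_image_in_sets_lebesgue UU_sets_lebesgue) simp_all
  then have "arcsin_chart k0 ` UU k0 L \<in> lmeasurable"
    by (intro bounded_set_imp_lmeasurable bounded_subset[OF bounded_cbox arcsin_chart_image_subset])
  then have "(\<lambda>x. \<bar>det (matrix (G x))\<bar>) absolutely_integrable_on UU k0 L"
    using measurable_differentiable_image_alt[OF UU_sets_lebesgue G(1) inj_on_arcsin_chart] by blast
  then show ?thesis
    by (rule absolutely_integrable_spike[OF _ negligible_empty])
       (simp add: G(2) abs_of_pos[OF UU_kap_pos])
qed

lemma absolutely_integrable_divide_kap:
  assumes "continuous_on (UU k0 L) g" and "bounded (g ` UU k0 L)"
  shows "(\<lambda>x. g x / kap k0 x) absolutely_integrable_on UU k0 L"
proof -
  obtain B where B: "\<And>x. x \<in> UU k0 L \<Longrightarrow> \<bar>g x\<bar> \<le> B"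
    using assms(2) by (auto simp: bounded_iff)
  have "continuous_on (UU k0 L) (kap k0)"
    unfolding kap_def [abs_def] by (intro continuous_intros)
  moreover have "kap k0 x \<noteq> 0" if "x \<in> UU k0 L" for x
    using UU_kap_pos[OF that] by simp
  ultimately have cont: "continuous_on (UU k0 L) (\<lambda>x. g x / kap k0 x)"
    by (intro continuous_on_divide assms(1) ballI)
  have "(\<lambda>x. 1 / kap k0 x) integrable_on UU k0 L"
    using absolutely_integrable_inverse_kap by (rule set_lebesgue_integral_eq_integral(1))
  then have int: "(\<lambda>x. B * (1 / kap k0 x)) integrable_on UU k0 L"
    by (rule integrable_on_mult_right)
  show ?thesis
  proof (rule measurable_bounded_by_integrable_imp_absolutely_integrable[OF
        continuous_imp_measurable_on_sets_lebesgue[OF cont UU_sets_lebesgue] UU_sets_lebesgue int])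
    fix x assume x: "x \<in> UU k0 L"
    have "\<bar>g x\<bar> / kap k0 x \<le> B / kap k0 x"
      using B[OF x] UU_kap_pos[OF x] by (intro divide_right_mono) auto
    then show "norm (g x / kap k0 x) \<le> B * (1 / kap k0 x)"
      by (simp only: real_norm_def abs_divide abs_of_pos[OF UU_kap_pos[OF x]]
          times_divide_eq_right mult_1_right)
  qed
qed

lemma jacobian_factor_continuous_bounded:
  fixes k0 s :: real
  assumes n: "continuous_on {0..L} n" and n': "continuous_on {0..L} n'"
    and \<alpha>: "continuous_on {0..L} \<alpha>" and \<alpha>': "continuous_on {0..L} \<alpha>'"
  defines "F \<equiv> \<lambda>x. jacobian_factor (n (x$3)) (\<alpha> (x$3)) (n' (x$3)) (\<alpha>' (x$3)) (hvec k0 s x)"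
  shows "continuous_on (UU k0 L) F" and "bounded (F ` UU k0 L)"
proof -
  define B :: "(real^3) set" where "B = cbox (vector [-\<bar>k0\<bar>, -\<bar>k0\<bar>, 0]) (vector [\<bar>k0\<bar>, \<bar>k0\<bar>, L])"
  have UU_B: "UU k0 L \<subseteq> B"
  proof
    fix x assume "x \<in> UU k0 L"
    then have "(x$1)\<^sup>2 + (x$2)\<^sup>2 < k0\<^sup>2" "0 \<le> x$3" "x$3 \<le> L" by (simp_all add: UU_def)
    moreover from this(1) have "(x$1)\<^sup>2 \<le> k0\<^sup>2" "(x$2)\<^sup>2 \<le> k0\<^sup>2"
      using zero_le_power2[of "x$1"] zero_le_power2[of "x$2"] by linarith+
    then have "\<bar>x$1\<bar> \<le> \<bar>k0\<bar>" "\<bar>x$2\<bar> \<le> \<bar>k0\<bar>" by (simp_all add: abs_le_square_iff)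
    ultimately show "x \<in> B"
      by (auto simp: B_def mem_box_cart forall_3 abs_le_iff)
  qed
  have "(\<lambda>x. x$3) ` B \<subseteq> {0..L}" by (auto simp: B_def mem_box_cart forall_3)
  then have "continuous_on B (\<lambda>x. n (x$3))" "continuous_on B (\<lambda>x. n' (x$3))"
    "continuous_on B (\<lambda>x. \<alpha> (x$3))" "continuous_on B (\<lambda>x. \<alpha>' (x$3))"
    by (auto intro!: continuous_on_compose2[OF n] continuous_on_compose2[OF n']
        continuous_on_compose2[OF \<alpha>] continuous_on_compose2[OF \<alpha>'] continuous_intros)
  then have cont: "continuous_on B F"
    unfolding F_def jacobian_factor_def hvec_eq_sum_axis kap_def
    by (intro continuous_intros continuous_on_cross)
  then show "continuous_on (UU k0 L) F" using UU_B by (rule continuous_on_subset)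
  have "bounded (F ` B)"
    using cont by (intro compact_imp_bounded compact_continuous_image) (simp_all add: B_def)
  then show "bounded (F ` UU k0 L)" using UU_B by (meson bounded_subset image_mono)
qed

lemma unit_curve_derivative_orthogonal:
  fixes n :: "real \<Rightarrow> 'a::real_inner"
  assumes "a < b" and t: "t \<in> {a..b}" and unit: "\<And>u. u \<in> {a..b} \<Longrightarrow> norm (n u) = 1"
    and n: "(n has_vector_derivative n') (at t within {a..b})"
  shows "n t \<bullet> n' = 0"
proof -
  have "((\<lambda>u. n u \<bullet> n u) has_derivative (\<lambda>h. n t \<bullet> (h *\<^sub>R n') + (h *\<^sub>R n') \<bullet> n t)) (at t within {a..b})"
    using n unfolding has_vector_derivative_def by (intro has_derivative_inner)
  moreover have "((\<lambda>u. n u \<bullet> n u) has_derivative (\<lambda>h. 0)) (at t within {a..b})"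
    by (rule has_derivative_transform_within[OF has_derivative_const[of 1] zero_less_one])
       (use t unit in \<open>auto simp: dot_square_norm\<close>)
  ultimately have "(\<lambda>h. n t \<bullet> (h *\<^sub>R n') + (h *\<^sub>R n') \<bullet> n t) = (\<lambda>h. 0)"
    using \<open>a < b\<close> t by (intro frechet_derivative_unique_within_closed_interval[of a b]) auto
  then have "n t \<bullet> n' + n' \<bullet> n t = 0" by (metis scaleR_one)
  then show ?thesis by (simp add: inner_commute)
qed

theorem lemma4p2:
  fixes k0 L :: real and \<alpha> \<alpha>' :: "real \<Rightarrow> real" and n n' :: "real \<Rightarrow> real^3" and s :: real
  assumes k0: "k0 > 0" and L: "L > 0"
    and \<alpha>_deriv: "\<And>t. t \<in> {0..L} \<Longrightarrow> (\<alpha> has_real_derivative \<alpha>' t) (at t within {0..L})"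
    and \<alpha>'_cont: "continuous_on {0..L} \<alpha>'"
    and n_deriv: "\<And>t. t \<in> {0..L} \<Longrightarrow> (n has_vector_derivative n' t) (at t within {0..L})"
    and n'_cont: "continuous_on {0..L} n'"
    and n_sphere: "\<And>t. t \<in> {0..L} \<Longrightarrow> n t \<in> sphere 0 1"
    and s: "s = 1 \<or> s = -1"
  shows "(\<forall>x \<in> UU k0 L.
            Tmap k0 n \<alpha> s differentiable (at x within UU k0 L) \<and>
            \<bar>det (jacobian (Tmap k0 n \<alpha> s) (at x within UU k0 L))\<bar> =
              k0 / kap k0 x *
              \<bar>(1 - cos (\<alpha> (x$3))) * ((n (x$3))$3 * (n' (x$3) \<bullet> hvec k0 s x)
                                        - (n' (x$3))$3 * (n (x$3) \<bullet> hvec k0 s x))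
               - (n (x$3))$3 * (n (x$3) \<bullet> (cross3 (n' (x$3)) (hvec k0 s x))) * sin (\<alpha> (x$3))
               - \<alpha>' (x$3) * ((n (x$3))$1 * x$2 - (n (x$3))$2 * x$1)
               + (n (x$3) \<bullet> hvec k0 s x) * ((n (x$3))$1 * (n' (x$3))$2 - (n (x$3))$2 * (n' (x$3))$1)
                 * sin (\<alpha> (x$3))\<bar>)
         \<and> (\<lambda>x. \<bar>det (jacobian (Tmap k0 n \<alpha> s) (at x within UU k0 L))\<bar>) absolutely_integrable_on UU k0 L"
proof -
  have unit: "norm (n t) = 1" if "t \<in> {0..L}" for t
    using n_sphere[OF that] by simp
  have nn: "n t \<bullet> n t = 1" and nn': "n t \<bullet> n' t = 0" if "t \<in> {0..L}" for t
    using unit[OF that] unit_curve_derivative_orthogonal[OF L that unit n_deriv[OF that]]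
    by (simp_all add: dot_square_norm)
  define F where "F x = jacobian_factor (n (x$3)) (\<alpha> (x$3)) (n' (x$3)) (\<alpha>' (x$3)) (hvec k0 s x)" for x
  have pointwise: "Tmap k0 n \<alpha> s differentiable (at x within UU k0 L)
      \<and> \<bar>det (jacobian (Tmap k0 n \<alpha> s) (at x within UU k0 L))\<bar> = k0 / kap k0 x * \<bar>F x\<bar>"
    if x: "x \<in> UU k0 L" for x
  proof -
    have t: "x$3 \<in> {0..L}" using x by (simp add: UU_def)
    show ?thesis
      using det_jacobian_Tmap[OF x L s n_deriv[OF t] \<alpha>_deriv[OF t] nn[OF t] nn'[OF t]]
        k0 s UU_kap_pos[OF x] by (auto simp: F_def abs_mult)
  qed
  have "continuous_on {0..L} n"
    using n_deriv has_vector_derivative_continuous continuous_on_eq_continuous_within by blast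
  moreover have "continuous_on {0..L} \<alpha>"
    using \<alpha>_deriv DERIV_continuous continuous_on_eq_continuous_within by blast
  ultimately have "continuous_on (UU k0 L) F" "bounded (F ` UU k0 L)"
    using jacobian_factor_continuous_bounded[OF _ n'_cont _ \<alpha>'_cont] unfolding F_def by blast+
  then have "(\<lambda>x. k0 *\<^sub>R norm (F x / kap k0 x)) absolutely_integrable_on UU k0 L"
    by (intro absolutely_integrable_scaleR_left absolutely_integrable_norm[unfolded o_def]
        absolutely_integrable_divide_kap)
  then have "(\<lambda>x. \<bar>det (jacobian (Tmap k0 n \<alpha> s) (at x within UU k0 L))\<bar>) absolutely_integrable_on UU k0 L"
    by (rule absolutely_integrable_spike[OF _ negligible_empty])
       (simp add: pointwise abs_div abs_of_pos[OF UU_kap_pos[of _ k0 L]] k0)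
  with pointwise show ?thesis unfolding F_def jacobian_factor_def by (simp add: hvec_def)
qed

end
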